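(* For every $n$ there is an instance of $P2\|C_{\max}$ with $3n+1$ jobs and an initial schedule from which a sequence of improving 3-swaps, each interchanging exactly three jobs between the two machines, has length $2^{\Omega(n)}$ before a 3-swap optimal solution is reached; i.e., the number of improving 3-swaps until a 3-swap optimal solution is reached can be $2^{\Omega(n)}$.
   Context: Problem $P2\|C_{\max}$: jobs with processing times $p_j>0$, two identical machines. A schedule $\sigma=(M_1,M_2)$ partitions the jobs into the sets processed on machines 1 and 2; loads $L_i=\sum_{j\in M_i}p_j$, makespan $\max_iL_i$. A 3-swap (in this statement) chooses $k'$ jobs on one machine and $k''$ jobs on the other with $k'+k''=3$ and interchanges their machine assignments; it is improving if the makespan strictly decreases. A 3-swap optimal solution is a schedule admitting no improving 3-swap. *)

theory Defs
  imports Complex_Main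
begin

text \<open>Jobs are 0,...,m-1 with processing times p j. A schedule is given by the set M1
of jobs on machine 1; machine 2 gets the remaining jobs {0..<m} - M1.\<close>

definition load :: "(nat \<Rightarrow> real) \<Rightarrow> nat set \<Rightarrow> real" where
  "load p M = (\<Sum>j\<in>M. p j)"

definition makespan :: "nat \<Rightarrow> (nat \<Rightarrow> real) \<Rightarrow> nat set \<Rightarrow> real" where
  "makespan m p M1 = max (load p M1) (load p ({0..<m} - M1))"

definition is_schedule :: "nat \<Rightarrow> nat set \<Rightarrow> bool" where
  "is_schedule m M1 \<longleftrightarrow> M1 \<subseteq> {0..<m}"

definition three_swap :: "nat \<Rightarrow> nat set \<Rightarrow> nat set \<Rightarrow> bool" where
  "three_swap m M1 M1' \<longleftrightarrow>
     (\<exists>A B. A \<subseteq> M1 \<and> B \<subseteq> {0..<m} - M1 \<and> card A + card B = 3 \<and>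
            M1' = (M1 - A) \<union> B)"

definition improving_three_swap :: "nat \<Rightarrow> (nat \<Rightarrow> real) \<Rightarrow> nat set \<Rightarrow> nat set \<Rightarrow> bool" where
  "improving_three_swap m p M1 M1' \<longleftrightarrow>
     three_swap m M1 M1' \<and> makespan m p M1' < makespan m p M1"

definition three_swap_optimal :: "nat \<Rightarrow> (nat \<Rightarrow> real) \<Rightarrow> nat set \<Rightarrow> bool" where
  "three_swap_optimal m p M1 \<longleftrightarrow> \<not> (\<exists>M1'. improving_three_swap m p M1 M1')"

end

theory Submission imports Defs begin

(* Give job j the processing time 2^j. The largest job K outweighs all others together, so
   as long as it stays on machine 1 the makespan is 2^K plus the binary number whose set bits
   are the other jobs on machine 1, and a 3-swap leaving job K in place is improving exactly
   when it flips three bits of that number, the highest of them being set. From 2^(k-1) + j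
   with j < 4, flip bits k-1, k-2, k-3; then descend on the lowest k-2 bits (bit k-2 stays
   set) to 2^(k-2) + j' with j' < 4, and finally descend on the lowest k-1 bits. Hence the
   length T(k) of such descents satisfies T(k) >= 1 + T(k-2) + T(k-1), so T(k) >= 2^((k-3)/2).
   As the makespan strictly decreases and there are finitely many schedules, the descent
   continues to a 3-swap optimal schedule. *)

lemma relpowp_map:
  "(R ^^ n) x y \<Longrightarrow> (\<And>x y. R x y \<Longrightarrow> S (f x) (f y)) \<Longrightarrow> (S ^^ n) (f x) (f y)"
  by (induction n arbitrary: y) auto

lemma relpowp_normal_form_exists:
  fixes f :: "'a \<Rightarrow> 'b::linorder"
  assumes "finite S" "x \<in> S"
    and step: "\<And>y z. y \<in> S \<Longrightarrow> R y z \<Longrightarrow> z \<in> S \<and> f z < f y"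
  shows "\<exists>n y. (R ^^ n) x y \<and> \<not> (\<exists>z. R y z)"
  using assms(2)
proof (induction "card {y \<in> S. f y < f x}" arbitrary: x rule: less_induct)
  case less
  show ?case
  proof (cases "\<exists>z. R x z")
    case False
    then show ?thesis using relpowp_0_I[of R x] by blast
  next
    case True
    then obtain z where "R x z" by blast
    with step less.prems have z: "z \<in> S" "f z < f x" by auto
    have "{y \<in> S. f y < f z} \<subseteq> {y \<in> S. f y < f x}" using z(2) by auto
    moreover have "z \<in> {y \<in> S. f y < f x} - {y \<in> S. f y < f z}" using z by simp
    ultimately have "card {y \<in> S. f y < f z} < card {y \<in> S. f y < f x}"
      using assms(1) by (intro psubset_card_mono) auto
    then obtain n y where "(R ^^ n) z y" "\<not> (\<exists>w. R y w)" using less.hyps z(1) by blast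
    then show ?thesis using relpowp_Suc_I2[of R x z n y] \<open>R x z\<close> by blast
  qed
qed

lemma sum_pow2_less:
  assumes "B \<subseteq> {..<t}"
  shows "(\<Sum>j\<in>B. (2::real) ^ j) < 2 ^ t"
proof -
  have "(\<Sum>j\<in>B. (2::real) ^ j) \<le> (\<Sum>j<t. 2 ^ j)" using assms by (intro sum_mono2) auto
  also have "\<dots> = 2 ^ t - 1" by (simp add: geometric_sum)
  finally show ?thesis by simp
qed

lemma sum_pow2_less_sum_pow2:
  assumes "finite A" "finite B" "t \<in> A - B" "\<forall>j\<in>B - A. j < t"
  shows "(\<Sum>j\<in>B. (2::real) ^ j) < (\<Sum>j\<in>A. 2 ^ j)"
proof -
  have "(\<Sum>j\<in>B. (2::real) ^ j) = (\<Sum>j\<in>A \<inter> B. 2 ^ j) + (\<Sum>j\<in>B - A. 2 ^ j)"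
    using sum.Int_Diff[OF assms(2), of _ A] by (simp add: Int_commute)
  moreover have "(\<Sum>j\<in>A. (2::real) ^ j) = (\<Sum>j\<in>A \<inter> B. 2 ^ j) + (\<Sum>j\<in>A - B. 2 ^ j)"
    using sum.Int_Diff[OF assms(1)] .
  moreover have "(\<Sum>j\<in>B - A. (2::real) ^ j) < 2 ^ t" using assms(4) by (intro sum_pow2_less) auto
  moreover have "(2::real) ^ t \<le> (\<Sum>j\<in>A - B. 2 ^ j)" using assms(1,3) by (intro member_le_sum) auto
  ultimately show ?thesis by linarith
qed

lemma makespan_dominant_job:
  assumes "\<And>j. 0 \<le> p j" "(\<Sum>j<K. p j) \<le> p K" "A \<subseteq> {..<K}"
  shows "makespan (Suc K) p (insert K A) = p K + load p A"
proof -
  have "K \<notin> A" "finite A" using assms(3) finite_subset by auto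
  then have "load p (insert K A) = p K + load p A" by (simp add: load_def)
  moreover have "load p ({0..<Suc K} - insert K A) \<le> (\<Sum>j<K. p j)"
    unfolding load_def using assms(1) by (intro sum_mono2) auto
  moreover have "0 \<le> load p A" unfolding load_def using assms(1) by (simp add: sum_nonneg)
  ultimately show ?thesis unfolding makespan_def using assms(2) by simp
qed

lemma improving_three_swaps_reach_optimal:
  assumes "M \<subseteq> {0..<m}"
  shows "\<exists>n M'. (improving_three_swap m p ^^ n) M M' \<and> three_swap_optimal m p M'"
  unfolding three_swap_optimal_def
proof (rule relpowp_normal_form_exists[where S = "Pow {0..<m}" and f = "makespan m p"])
  fix M1 M2 assume "M1 \<in> Pow {0..<m}" and improving: "improving_three_swap m p M1 M2"
  moreover obtain A B where "B \<subseteq> {0..<m} - M1" "M2 = (M1 - A) \<union> B"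
    using improving unfolding improving_three_swap_def three_swap_def by blast
  ultimately show "M2 \<in> Pow {0..<m} \<and> makespan m p M2 < makespan m p M1"
    unfolding improving_three_swap_def by auto
qed (use assms in auto)

definition flip3_down :: "nat \<Rightarrow> nat set \<Rightarrow> nat set \<Rightarrow> bool" where
  "flip3_down K A B \<longleftrightarrow> A \<subseteq> {..<K} \<and>
     (\<exists>D. D \<subseteq> {..<K} \<and> card D = 3 \<and> Max D \<in> A \<and> B = sym_diff A D)"

lemma flip3_downI:
  "A \<subseteq> {..<K} \<Longrightarrow> D \<subseteq> {..<K} \<Longrightarrow> card D = 3 \<Longrightarrow> Max D \<in> A \<Longrightarrow>
   flip3_down K A (sym_diff A D)"
  unfolding flip3_down_def by blast

lemma flip3_down_mono:
  assumes "flip3_down K A B" "K \<le> K'"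
  shows "flip3_down K' A B"
proof -
  obtain D where "A \<subseteq> {..<K}" "D \<subseteq> {..<K}" "card D = 3" "Max D \<in> A"
    and B: "B = sym_diff A D"
    using assms(1) unfolding flip3_down_def by blast
  then have "flip3_down K' A (sym_diff A D)"
    using assms(2) by (intro flip3_downI) auto
  then show ?thesis unfolding B .
qed

lemma flip3_down_insert:
  assumes "flip3_down K A B" "K \<le> x" "x < K'"
  shows "flip3_down K' (insert x A) (insert x B)"
proof -
  obtain D where A: "A \<subseteq> {..<K}" and D: "D \<subseteq> {..<K}" "card D = 3" "Max D \<in> A"
    and B: "B = sym_diff A D"
    using assms(1) unfolding flip3_down_def by blast
  have "x \<notin> D" using D(1) assms(2) by auto
  then have "insert x B = sym_diff (insert x A) D" using B by blast
  moreover have "flip3_down K' (insert x A) (sym_diff (insert x A) D)"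
    by (rule flip3_downI) (use A D assms(2,3) in auto)
  ultimately show ?thesis by simp
qed

lemma flip3_down_low_bits:
  assumes "J \<subseteq> {0,1}" "3 \<le> K"
  shows "flip3_down K (insert 2 J) ({0,1} - J)"
proof -
  have "flip3_down K (insert 2 J) (sym_diff (insert 2 J) {0,1,2})"
    by (rule flip3_downI) (use assms in auto)
  moreover have "sym_diff (insert 2 J) {0,1,2} = {0,1} - J" using assms(1) by auto
  ultimately show ?thesis by simp
qed

lemma flip3_down_top_bits:
  assumes "J \<subseteq> {..<k}"
  shows "flip3_down (k+3) (insert (k+2) J) (insert (k+1) (insert k J))"
proof -
  have "flip3_down (k+3) (insert (k+2) J) (sym_diff (insert (k+2) J) {k,k+1,k+2})"
    by (rule flip3_downI) (use assms in auto)
  moreover have "sym_diff (insert (k+2) J) {k,k+1,k+2} = insert (k+1) (insert k J)"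
    using assms by auto
  ultimately show ?thesis by simp
qed

lemma flip3_down_long_chain:
  assumes "J \<subseteq> {0,1}"
  shows "\<exists>n J'. J' \<subseteq> {0,1} \<and> (flip3_down (m+3) ^^ n) (insert (m+2) J) J' \<and>
           2 ^ (m div 2) \<le> n"
  using assms
proof (induction m arbitrary: J rule: induct_nat_012)
  case 0
  have "flip3_down 3 (insert 2 J) ({0,1} - J)" using flip3_down_low_bits[OF 0] by simp
  then show ?case by (intro exI[of _ 1] exI[of _ "{0,1} - J"]) (simp add: eval_nat_numeral eq_OO)
next
  case 1
  (* bit 1 may be set already, so flip bits 3, 2, 0 rather than 3, 2, 1 *)
  define J1 where "J1 = sym_diff J {0}"
  have "flip3_down 4 (insert 3 J) (sym_diff (insert 3 J) {0,2,3})"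
    by (rule flip3_downI) (use 1 in auto)
  moreover have "sym_diff (insert 3 J) {0,2,3} = insert 2 J1" using 1 unfolding J1_def by auto
  moreover have "flip3_down 4 (insert 2 J1) ({0,1} - J1)"
    using 1 unfolding J1_def by (intro flip3_down_low_bits) auto
  ultimately have "(flip3_down 4 ^^ Suc 1) (insert 3 J) ({0,1} - J1)"
    by (metis relpowp_1 relpowp_Suc_I2)
  then show ?case by (intro exI[of _ "Suc 1"] exI[of _ "{0,1} - J1"]) (simp add: eval_nat_numeral eq_OO)
next
  case (ge2 m)
  obtain n1 J1 where J1: "J1 \<subseteq> {0,1}" "(flip3_down (m+3) ^^ n1) (insert (m+2) J) J1"
    and n1: "2 ^ (m div 2) \<le> n1"
    using ge2.IH(1)[OF ge2.prems] by blast
  have "Suc m + 3 = m + 4" "Suc m + 2 = m + 3" by simp_all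
  then obtain n2 J2 where J2: "J2 \<subseteq> {0,1}" "(flip3_down (m+4) ^^ n2) (insert (m+3) J1) J2"
    and n2: "2 ^ (Suc m div 2) \<le> n2"
    using ge2.IH(2)[OF J1(1)] by metis
  have "J \<subseteq> {..<m+2}" using ge2.prems by auto
  from flip3_down_top_bits[OF this]
  have "flip3_down (m+5) (insert (m+4) J) (insert (m+3) (insert (m+2) J))"
    by (simp add: eval_nat_numeral)
  moreover have "(flip3_down (m+5) ^^ n1) (insert (m+3) (insert (m+2) J)) (insert (m+3) J1)"
    using J1(2) by (rule relpowp_map) (erule flip3_down_insert; simp)
  moreover have "(flip3_down (m+5) ^^ n2) (insert (m+3) J1) J2"
    using J2(2) by (rule relpowp_mono[rotated]) (erule flip3_down_mono; simp)
  ultimately have chain: "(flip3_down (m+5) ^^ (Suc n1 + n2)) (insert (m+4) J) J2"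
    by (meson relpowp_Suc_I2 relpowp_trans)
  have bound: "2 ^ (Suc (Suc m) div 2) \<le> Suc n1 + n2"
  proof -
    have "(2::nat) ^ (m div 2) \<le> 2 ^ (Suc m div 2)" by (intro power_increasing) auto
    moreover have "(2::nat) ^ (Suc (Suc m) div 2) = 2 * 2 ^ (m div 2)" by simp
    ultimately show ?thesis using n1 n2 by linarith
  qed
  have shift: "Suc (Suc m) + 3 = m + 5" "Suc (Suc m) + 2 = m + 4" by simp_all
  show ?case unfolding shift by (intro exI[of _ "Suc n1 + n2"] exI[of _ J2] conjI J2(1) chain bound)
qed

lemma improving_three_swap_if_flip3_down:
  assumes "flip3_down K A B"
  shows "improving_three_swap (Suc K) (\<lambda>j. 2 ^ j) (insert K A) (insert K B)"
proof -
  obtain D where A: "A \<subseteq> {..<K}" and D: "D \<subseteq> {..<K}" "card D = 3" "Max D \<in> A"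
    and B: "B = sym_diff A D"
    using assms unfolding flip3_down_def by blast
  have "finite D" using D(2) by (intro card_ge_0_finite) simp
  have "D \<noteq> {}" using D(2) by auto
  have top: "j \<le> Max D" if "j \<in> D" for j using \<open>finite D\<close> that by simp
  have swap: "three_swap (Suc K) (insert K A) (insert K B)"
    unfolding three_swap_def
  proof (intro exI conjI)
    show "A \<inter> D \<subseteq> insert K A" "D - A \<subseteq> {0..<Suc K} - insert K A" using D(1) by auto
    show "card (A \<inter> D) + card (D - A) = 3"
      using card_Int_Diff[OF \<open>finite D\<close>, of A] D(2) by (simp add: Int_commute)
    show "insert K B = (insert K A - A \<inter> D) \<union> (D - A)" using B D(1) by auto
  qed
  have less: "load (\<lambda>j. 2 ^ j) B < load (\<lambda>j. (2::real) ^ j) A"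
    unfolding load_def
  proof (rule sum_pow2_less_sum_pow2)
    show "finite A" "finite B" using A B \<open>finite D\<close> finite_subset by auto
    show "Max D \<in> A - B" using B D(3) \<open>finite D\<close> \<open>D \<noteq> {}\<close> by auto
    show "\<forall>j\<in>B - A. j < Max D"
    proof
      fix j assume "j \<in> B - A"
      then have "j \<in> D" "j \<noteq> Max D" using B D(3) by auto
      then show "j < Max D" using top le_neq_implies_less by blast
    qed
  qed
  have "(\<Sum>j<K. (2::real) ^ j) \<le> 2 ^ K" using sum_pow2_less[of "{..<K}" K] by simp
  then have makespan: "makespan (Suc K) (\<lambda>j. 2 ^ j) (insert K X) = 2 ^ K + load (\<lambda>j. 2 ^ j) X"
    if "X \<subseteq> {..<K}" for X
    using that by (intro makespan_dominant_job) auto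
  have "B \<subseteq> {..<K}" using A B D(1) by auto
  then have "makespan (Suc K) (\<lambda>j. 2 ^ j) (insert K B)
      < makespan (Suc K) (\<lambda>j. 2 ^ j) (insert K A)"
    using makespan[OF A] makespan less by simp
  then show ?thesis unfolding improving_three_swap_def using swap by blast
qed

lemma long_improving_run:
  "\<exists>S k. S 0 = {m+3, m+2} \<and>
     (\<forall>i<k. improving_three_swap (m+4) (\<lambda>j. 2 ^ j) (S i) (S (Suc i))) \<and>
     three_swap_optimal (m+4) (\<lambda>j. 2 ^ j) (S k) \<and> 2 ^ (m div 2) \<le> k"
proof -
  obtain n J where J: "J \<subseteq> {0,1}" "(flip3_down (m+3) ^^ n) {m+2} J" "2 ^ (m div 2) \<le> n"
    using flip3_down_long_chain[of "{}" m] by auto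
  have jobs: "Suc (m+3) = m+4" by simp
  have "(improving_three_swap (Suc (m+3)) (\<lambda>j. 2 ^ j) ^^ n) (insert (m+3) {m+2}) (insert (m+3) J)"
    using J(2) by (rule relpowp_map) (rule improving_three_swap_if_flip3_down)
  then have descent: "(improving_three_swap (m+4) (\<lambda>j. 2 ^ j) ^^ n) {m+3, m+2} (insert (m+3) J)"
    unfolding jobs .
  have "insert (m+3) J \<subseteq> {0..<m+4}" using J(1) by auto
  then obtain n' M
    where completion: "(improving_three_swap (m+4) (\<lambda>j. 2 ^ j) ^^ n') (insert (m+3) J) M"
    and opt: "three_swap_optimal (m+4) (\<lambda>j. 2 ^ j) M"
    using improving_three_swaps_reach_optimal by blast
  from descent completion
  have "(improving_three_swap (m+4) (\<lambda>j. 2 ^ j) ^^ (n + n')) {m+3, m+2} M"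
    by (rule relpowp_trans)
  then obtain S where "S 0 = {m+3, m+2}" "S (n + n') = M"
    "\<forall>i<n + n'. improving_three_swap (m+4) (\<lambda>j. 2 ^ j) (S i) (S (Suc i))"
    unfolding relpowp_fun_conv by blast
  then show ?thesis using opt J(3) by (intro exI[of _ S] exI[of _ "n + n'"]) auto
qed

theorem theorem5:
  "\<exists>c::real. c > 0 \<and> (\<exists>N::nat. \<forall>n\<ge>N.
     \<exists>(p :: nat \<Rightarrow> real) (S :: nat \<Rightarrow> nat set) (k :: nat).
       (\<forall>j<3*n+1. p j > 0) \<and>
       is_schedule (3*n+1) (S 0) \<and>
       (\<forall>i<k. improving_three_swap (3*n+1) p (S i) (S (Suc i))) \<and>
       three_swap_optimal (3*n+1) p (S k) \<and>
       real k \<ge> 2 powr (c * real n))"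
proof -
  have "\<exists>(p :: nat \<Rightarrow> real) S k. (\<forall>j<3*n+1. p j > 0) \<and> is_schedule (3*n+1) (S 0) \<and>
      (\<forall>i<k. improving_three_swap (3*n+1) p (S i) (S (Suc i))) \<and>
      three_swap_optimal (3*n+1) p (S k) \<and> real k \<ge> 2 powr (1 * real n)"
    if "3 \<le> n" for n
  proof -
    define m where "m = 3 * n - 3"
    have jobs: "3 * n + 1 = m + 4" using that unfolding m_def by simp
    obtain S k where run: "S 0 = {m+3, m+2}"
      "\<forall>i<k. improving_three_swap (m+4) (\<lambda>j. 2 ^ j) (S i) (S (Suc i))"
      "three_swap_optimal (m+4) (\<lambda>j. 2 ^ j) (S k)" "2 ^ (m div 2) \<le> k"
      using long_improving_run by blast
    have "n \<le> m div 2" using that unfolding m_def by presburger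
    then have "(2::nat) ^ n \<le> 2 ^ (m div 2)" by (intro power_increasing) auto
    then have "real (2 ^ n) \<le> real k" using run(4) by linarith
    then have "2 powr (1 * real n) \<le> real k" by (simp add: powr_realpow)
    moreover have "is_schedule (m+4) (S 0)" unfolding is_schedule_def run(1) by auto
    ultimately show ?thesis
      unfolding jobs using run(2,3)
      by (intro exI[of _ "\<lambda>j. 2 ^ j"] exI[of _ S] exI[of _ k] conjI) simp_all
  qed
  then show ?thesis by (intro exI[of _ 1] conjI exI[of _ 3] allI impI) simp_all
qed

end
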